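(* There is an absolute constant $C>0$ such that the following holds. Let $F$ be a distribution with PDF $f$, let $\epsilon>0$ and let $x_1<x_2<\dots<x_m$ be points. Suppose that for each $i$ we have numbers $F_i\in[0,1]$ with $F(x_i)\in[F_i-\epsilon,F_i+\epsilon]$, and that for each $i<m$ either $x_{i+1}-x_i\le\epsilon$, or there are numbers $\underline f_i\le\overline f_i$ with $f(x)\in[\underline f_i,\overline f_i]$ for all $x\in[x_i,x_{i+1}]$ and $(x_{i+1}-x_i)(\overline f_i-\underline f_i)\le\epsilon$. Let $F_{(1)}\le\dots\le F_{(m)}$ be the values $F_1,\dots,F_m$ sorted in non-decreasing order, and let $\hat F$ be the function with $\hat F(x_i)=F_{(i)}$ that is linear on each $[x_i,x_{i+1}]$. Then for all $v\in[x_1,x_m]$, $F(v-C\epsilon)-C\epsilon\le\hat F(v)\le F(v+C\epsilon)+C\epsilon$, i.e. $\hat F$ is within $O(\epsilon)$ Lévy distance of $F$ on $[x_1,x_m]$. *)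

theory Defs
  imports "HOL-Analysis.Analysis"
begin

text \<open>Points are indexed 0..m-1 (paper: 1..m). Piecewise linear interpolation
  through (x i, y i), i < m, evaluated at v; on [x i, x (i+1)] it is linear.\<close>
definition pw_lin :: "(nat \<Rightarrow> real) \<Rightarrow> (nat \<Rightarrow> real) \<Rightarrow> nat \<Rightarrow> real \<Rightarrow> real" where
  "pw_lin x y m v =
     (if \<exists>i. Suc i < m \<and> x i \<le> v \<and> v \<le> x (Suc i) then
        (let i = (LEAST i. Suc i < m \<and> x i \<le> v \<and> v \<le> x (Suc i)) in
           y i + (y (Suc i) - y i) * (v - x i) / (x (Suc i) - x i))
      else y 0)"

definition sorted_val :: "(nat \<Rightarrow> real) \<Rightarrow> nat \<Rightarrow> nat \<Rightarrow> real" where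
  "sorted_val Fv m i = sort (map Fv [0..<m]) ! i"

end

theory Submission
  imports Defs
begin

text \<open>Sorting is 1-Lipschitz for the sup-distance to a non-decreasing sequence, so since
  F(x_1) \<le> ... \<le> F(x_m) the sorted values are still \<epsilon>-close to the F(x_i). On a
  segment of length at most \<epsilon> the interpolant lies between F(x_i) - \<epsilon> and
  F(x_{i+1}) + \<epsilon>, hence between F(v - 2\<epsilon>) - 2\<epsilon> and F(v + 2\<epsilon>) + 2\<epsilon>.
  On a segment where the density is pinned down to within \<epsilon> / (x_{i+1} - x_i), F
  deviates from its chord by at most \<epsilon>, so the interpolant is within 2\<epsilon> of F(v).
  Thus C = 2 works.\<close>

lemma length_filter_le_if_nth:
  assumes "\<And>k. k < length xs \<Longrightarrow> P (xs ! k) \<Longrightarrow> k < i"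
  shows "length (filter P xs) \<le> i"
proof -
  have "{k. k < length xs \<and> P (xs ! k)} \<subseteq> {..<i}"
    using assms by auto
  then show ?thesis
    unfolding length_filter_conv_card by (metis card_lessThan card_mono finite_lessThan)
qed

lemma length_filter_gt_if_nth:
  assumes "i < length xs" and "\<And>k. k \<le> i \<Longrightarrow> P (xs ! k)"
  shows "i < length (filter P xs)"
proof -
  have "{..i} \<subseteq> {k. k < length xs \<and> P (xs ! k)}"
    using assms by auto
  then have "card {..i} \<le> card {k. k < length xs \<and> P (xs ! k)}"
    by (intro card_mono) auto
  then show ?thesis
    unfolding length_filter_conv_card by simp
qed

lemma nth_sort_le:
  fixes xs :: "'a::linorder list"
  assumes "i < length (filter (\<lambda>y. y \<le> c) xs)"
  shows "sort xs ! i \<le> c"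
proof (rule ccontr)
  assume "\<not> sort xs ! i \<le> c"
  then have "length (filter (\<lambda>y. y \<le> c) (sort xs)) \<le> i"
    using sorted_nth_mono[OF sorted_sort, of i _ xs]
    by (intro length_filter_le_if_nth) (meson not_less order_trans)
  then show False
    using assms by (simp add: filter_sort)
qed

lemma le_nth_sort:
  fixes xs :: "'a::linorder list"
  assumes "length (filter (\<lambda>y. y < c) xs) \<le> i" and "i < length xs"
  shows "c \<le> sort xs ! i"
proof (rule ccontr)
  assume "\<not> c \<le> sort xs ! i"
  then have "i < length (filter (\<lambda>y. y < c) (sort xs))"
    using sorted_nth_mono[OF sorted_sort, of _ i xs] assms(2)
    by (intro length_filter_gt_if_nth) (auto simp: not_le intro: le_less_trans)
  then show False
    using assms by (simp add: filter_sort)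
qed

lemma sort_nth_close:
  fixes xs ys :: "'a::linordered_idom list"
  assumes "sorted ys" and "length xs = length ys"
    and close: "\<And>k. k < length xs \<Longrightarrow> \<bar>xs ! k - ys ! k\<bar> \<le> e"
    and i: "i < length xs"
  shows "\<bar>sort xs ! i - ys ! i\<bar> \<le> e"
proof -
  have "length (filter (\<lambda>y. y < ys ! i - e) xs) \<le> i"
  proof (rule length_filter_le_if_nth, rule ccontr)
    fix k assume k: "k < length xs" "xs ! k < ys ! i - e" "\<not> k < i"
    then have "ys ! i \<le> ys ! k"
      using \<open>sorted ys\<close> assms(2) by (simp add: sorted_nth_mono)
    with k close[of k] show False by (simp add: abs_le_iff)
  qed
  then have lower: "ys ! i - e \<le> sort xs ! i"
    using le_nth_sort i by blast
  have "i < length (filter (\<lambda>y. y \<le> ys ! i + e) xs)"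
  proof (rule length_filter_gt_if_nth[OF i])
    fix k assume k: "k \<le> i"
    then have "ys ! k \<le> ys ! i"
      using \<open>sorted ys\<close> assms(2) i by (simp add: sorted_nth_mono)
    with k close[of k] i show "xs ! k \<le> ys ! i + e"
      by (simp add: abs_le_iff)
  qed
  then have upper: "sort xs ! i \<le> ys ! i + e"
    using nth_sort_le by blast
  from lower upper show ?thesis
    by (simp add: abs_le_iff)
qed

lemma integrable_on_subset_if_nonneg:
  fixes f :: "'a::euclidean_space \<Rightarrow> real"
  assumes "\<And>t. 0 \<le> f t" and "f integrable_on UNIV" and "S \<in> sets lebesgue"
  shows "f integrable_on S"
proof -
  have "f absolutely_integrable_on UNIV"
    using assms by (simp add: absolutely_integrable_on_iff_nonneg)
  then have "f absolutely_integrable_on S"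
    using set_integrable_subset assms(3) by blast
  then show ?thesis
    using absolutely_integrable_on_def by blast
qed

lemma integral_atMost_split:
  fixes f :: "real \<Rightarrow> real"
  assumes "f integrable_on {..a}" and "f integrable_on {a..b}" and "a \<le> b"
  shows "integral {..b} f = integral {..a} f + integral {a..b} f"
proof -
  have "{..a} \<inter> {a..b} = {a}"
    using assms(3) by auto
  then have "negligible ({..a} \<inter> {a..b})"
    by simp
  from has_integral_Un[OF assms(1,2)[THEN integrable_integral] this]
  have "(f has_integral integral {..a} f + integral {a..b} f) ({..a} \<union> {a..b})" .
  moreover have "{..a} \<union> {a..b} = {..b}"
    using assms(3) by auto
  ultimately show ?thesis
    by (simp add: integral_unique)
qed

lemma integral_atMost_diff_if_nonneg:
  fixes f :: "real \<Rightarrow> real"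
  assumes "\<And>t. 0 \<le> f t" and "f integrable_on UNIV" and "a \<le> b"
  shows "integral {..b} f - integral {..a} f = integral {a..b} f"
  using integral_atMost_split[OF integrable_on_subset_if_nonneg integrable_on_subset_if_nonneg]
    assms by simp

lemma integral_atMost_mono_if_nonneg:
  fixes f :: "real \<Rightarrow> real"
  assumes "\<And>t. 0 \<le> f t" and "f integrable_on UNIV" and "a \<le> b"
  shows "integral {..a} f \<le> integral {..b} f"
proof -
  have "0 \<le> integral {a..b} f"
    using assms(1) integrable_on_subset_if_nonneg[OF assms(1,2)]
    by (simp add: Henstock_Kurzweil_Integration.integral_nonneg)
  with integral_atMost_diff_if_nonneg[OF assms] show ?thesis
    by simp
qed

lemma integral_between_bounds:
  fixes f :: "real \<Rightarrow> real"
  assumes "f integrable_on {a..b}" and "a \<le> b" and "\<forall>t\<in>{a..b}. lo \<le> f t \<and> f t \<le> hi"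
  shows "lo * (b - a) \<le> integral {a..b} f \<and> integral {a..b} f \<le> hi * (b - a)"
proof -
  have "integral {a..b} (\<lambda>_. lo) \<le> integral {a..b} f"
    by (rule integral_le) (use assms in auto)
  moreover have "integral {a..b} f \<le> integral {a..b} (\<lambda>_. hi)"
    by (rule integral_le) (use assms in auto)
  ultimately show ?thesis
    using assms(2) by (simp add: mult.commute)
qed

text \<open>Both the integral up to v and its linear interpolation lie between lo (v - a) and
  hi (v - a).\<close>
lemma integral_deviation_from_chord:
  fixes f :: "real \<Rightarrow> real"
  assumes f: "f integrable_on {a..b}" and "a \<le> v" "v \<le> b" "a < b"
    and bounds: "\<forall>t\<in>{a..b}. lo \<le> f t \<and> f t \<le> hi"
  shows "\<bar>integral {a..v} f - integral {a..b} f * ((v - a) / (b - a))\<bar> \<le> (hi - lo) * (v - a)"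
proof -
  define s where "s = (v - a) / (b - a)"
  have s: "0 \<le> s" "s * (b - a) = v - a"
    using assms by (auto simp: s_def)
  have "lo * (v - a) \<le> integral {a..v} f \<and> integral {a..v} f \<le> hi * (v - a)"
    using assms integrable_on_subinterval[OF f, of a v]
    by (intro integral_between_bounds) auto
  moreover have "lo * (b - a) * s \<le> integral {a..b} f * s \<and> integral {a..b} f * s \<le> hi * (b - a) * s"
    using integral_between_bounds[OF f _ bounds] assms s(1) by (simp add: mult_right_mono)
  moreover have "lo * (b - a) * s = lo * (v - a)" "hi * (b - a) * s = hi * (v - a)"
    using s(2) by (simp_all add: mult.assoc mult.commute[of s])
  ultimately show ?thesis
    unfolding s_def[symmetric] abs_le_iff by (simp add: left_diff_distrib)
qed

lemma chord_in_levy_band: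
  fixes f F :: "real \<Rightarrow> real"
  assumes f_nonneg: "\<And>t. 0 \<le> f t" and f_int: "f integrable_on UNIV"
    and F: "\<And>t. F t = integral {..t} f"
    and "a < b" "a \<le> v" "v \<le> b"
    and p: "\<bar>p - F a\<bar> \<le> \<epsilon>" and q: "\<bar>q - F b\<bar> \<le> \<epsilon>"
    and segment: "b - a \<le> \<epsilon> \<or>
      (\<exists>lo hi. (\<forall>t\<in>{a..b}. lo \<le> f t \<and> f t \<le> hi) \<and> (b - a) * (hi - lo) \<le> \<epsilon>)"
  shows "F (v - 2 * \<epsilon>) - 2 * \<epsilon> \<le> p + (q - p) * (v - a) / (b - a) \<and>
         p + (q - p) * (v - a) / (b - a) \<le> F (v + 2 * \<epsilon>) + 2 * \<epsilon>"
proof -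
  have F_mono: "\<And>s t. s \<le> t \<Longrightarrow> F s \<le> F t"
    unfolding F using integral_atMost_mono_if_nonneg[OF f_nonneg f_int] .
  have "0 \<le> \<epsilon>"
    using p by linarith
  define s where "s = (v - a) / (b - a)"
  have s: "0 \<le> s" "s \<le> 1"
    using assms by (auto simp: s_def)
  have chord: "p + (q - p) * (v - a) / (b - a) = (1 - s) * p + s * q"
  proof -
    have "(q - p) * (v - a) / (b - a) = (q - p) * s"
      by (simp add: s_def)
    then show ?thesis
      by (simp add: algebra_simps)
  qed
  from segment show ?thesis
  proof
    assume short: "b - a \<le> \<epsilon>"
    have "F a - \<epsilon> \<le> (1 - s) * p + s * q"
      using convex_bound_le[of "- p" "\<epsilon> - F a" "- q" "1 - s" s] p q s F_mono[OF \<open>a < b\<close>[THEN less_imp_le]]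
      by (simp add: abs_le_iff algebra_simps)
    moreover have "(1 - s) * p + s * q \<le> F b + \<epsilon>"
      using convex_bound_le[of p "F b + \<epsilon>" q "1 - s" s] p q s F_mono[OF \<open>a < b\<close>[THEN less_imp_le]]
      by (simp add: abs_le_iff)
    moreover have "F (v - 2 * \<epsilon>) \<le> F a" "F b \<le> F (v + 2 * \<epsilon>)"
      using short \<open>a \<le> v\<close> \<open>v \<le> b\<close> \<open>0 \<le> \<epsilon>\<close> by (auto intro!: F_mono)
    ultimately show ?thesis
      unfolding chord using \<open>0 \<le> \<epsilon>\<close> by linarith
  next
    assume "\<exists>lo hi. (\<forall>t\<in>{a..b}. lo \<le> f t \<and> f t \<le> hi) \<and> (b - a) * (hi - lo) \<le> \<epsilon>"
    then obtain lo hi where bounds: "\<forall>t\<in>{a..b}. lo \<le> f t \<and> f t \<le> hi"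
      and small: "(b - a) * (hi - lo) \<le> \<epsilon>"
      by blast
    have "F v - F a = integral {a..v} f" "F b - F a = integral {a..b} f"
      using assms integral_atMost_diff_if_nonneg[OF f_nonneg f_int] by auto
    moreover have "\<bar>integral {a..v} f - integral {a..b} f * s\<bar> \<le> (hi - lo) * (v - a)"
      unfolding s_def using assms bounds integrable_on_subset_if_nonneg[OF f_nonneg f_int]
      by (intro integral_deviation_from_chord) auto
    moreover have "(hi - lo) * (v - a) \<le> (b - a) * (hi - lo)"
      using assms bounds by (auto intro!: mult_left_mono simp: mult.commute[of "b - a"])
    ultimately have "\<bar>F v - ((1 - s) * F a + s * F b)\<bar> \<le> \<epsilon>"
      using small by (simp add: algebra_simps)
    moreover have "\<bar>(1 - s) * (p - F a) + s * (q - F b)\<bar> \<le> \<epsilon>"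
    proof -
      have "\<bar>(1 - s) * (p - F a) + s * (q - F b)\<bar> \<le> (1 - s) * \<bar>p - F a\<bar> + s * \<bar>q - F b\<bar>"
        using s by (metis abs_mult abs_of_nonneg abs_triangle_ineq diff_ge_0_iff_ge)
      also have "\<dots> \<le> \<epsilon>"
        using convex_bound_le[OF p q] s by simp
      finally show ?thesis .
    qed
    moreover have "F (v - 2 * \<epsilon>) \<le> F v" "F v \<le> F (v + 2 * \<epsilon>)"
      using \<open>0 \<le> \<epsilon>\<close> by (auto intro: F_mono)
    ultimately show ?thesis
      unfolding chord by (simp add: abs_le_iff algebra_simps)
  qed
qed

lemma segment_containing:
  fixes x :: "nat \<Rightarrow> real"
  assumes "0 < n" and "x 0 \<le> v" and "v \<le> x n"
  shows "\<exists>i<n. x i \<le> v \<and> v \<le> x (Suc i)"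
  using assms
proof (induction n)
  case (Suc n)
  then show ?case
    by (cases "0 < n \<and> v \<le> x n") (auto intro: less_SucI)
qed simp

lemma pw_lin_cases:
  fixes x :: "nat \<Rightarrow> real"
  assumes "x 0 \<le> v" and "v \<le> x (m - 1)"
  obtains "v = x 0" and "pw_lin x y m v = y 0"
  | i where "Suc i < m" and "x i \<le> v" and "v \<le> x (Suc i)"
      and "pw_lin x y m v = y i + (y (Suc i) - y i) * (v - x i) / (x (Suc i) - x i)"
proof (cases "\<exists>i. Suc i < m \<and> x i \<le> v \<and> v \<le> x (Suc i)")
  case True
  define i where "i = (LEAST i. Suc i < m \<and> x i \<le> v \<and> v \<le> x (Suc i))"
  have "Suc i < m \<and> x i \<le> v \<and> v \<le> x (Suc i)"
    unfolding i_def using True by (rule LeastI_ex)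
  with True show ?thesis
    using that(2)[of i] by (simp add: pw_lin_def i_def[symmetric] Let_def)
next
  case False
  then have "\<not> 0 < m - 1"
    using segment_containing[of "m - 1" x v] assms by (auto simp: less_diff_conv)
  then have "v = x 0"
    using assms by simp
  moreover have "pw_lin x y m v = y 0"
    unfolding pw_lin_def using False by (simp only: if_False)
  ultimately show ?thesis
    by (rule that(1))
qed

lemma pw_lin_sorted_levy_bounds:
  fixes f F :: "real \<Rightarrow> real" and x Fv :: "nat \<Rightarrow> real"
  assumes f_nonneg: "\<And>t. 0 \<le> f t" and f_int: "f integrable_on UNIV"
    and F: "\<And>t. F t = integral {..t} f"
    and "0 < m"
    and x_strict: "\<And>i. Suc i < m \<Longrightarrow> x i < x (Suc i)"
    and Fv_close: "\<And>i. i < m \<Longrightarrow> \<bar>Fv i - F (x i)\<bar> \<le> \<epsilon>"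
    and segments: "\<And>i. Suc i < m \<Longrightarrow> x (Suc i) - x i \<le> \<epsilon> \<or>
      (\<exists>lo hi. (\<forall>t\<in>{x i..x (Suc i)}. lo \<le> f t \<and> f t \<le> hi) \<and> (x (Suc i) - x i) * (hi - lo) \<le> \<epsilon>)"
    and v: "x 0 \<le> v" "v \<le> x (m - 1)"
  shows "F (v - 2 * \<epsilon>) - 2 * \<epsilon> \<le> pw_lin x (sorted_val Fv m) m v \<and>
         pw_lin x (sorted_val Fv m) m v \<le> F (v + 2 * \<epsilon>) + 2 * \<epsilon>"
proof -
  have F_mono: "\<And>s t. s \<le> t \<Longrightarrow> F s \<le> F t"
    unfolding F using integral_atMost_mono_if_nonneg[OF f_nonneg f_int] .
  have x_mono: "x j \<le> x k" if "j \<le> k" "k < m" for j k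
  proof (rule lift_Suc_mono_le_ivl[where N = "{n. Suc n < m}"])
    show "x n \<le> x (Suc n)" if "n \<in> {n. Suc n < m}" for n
      using x_strict that by (simp add: less_imp_le)
  qed (use that in auto)
  have "sorted (map (\<lambda>i. F (x i)) [0..<m])"
    by (auto simp: sorted_iff_nth_mono intro!: F_mono x_mono)
  then have y_close: "\<bar>sorted_val Fv m i - F (x i)\<bar> \<le> \<epsilon>" if "i < m" for i
    using sort_nth_close[of "map (\<lambda>i. F (x i)) [0..<m]" "map Fv [0..<m]" \<epsilon> i] Fv_close that
    by (simp add: sorted_val_def)
  have "0 \<le> \<epsilon>"
    using Fv_close[OF \<open>0 < m\<close>] by linarith
  from v show ?thesis
  proof (cases rule: pw_lin_cases[where y = "sorted_val Fv m"])
    case 1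
    have "F (v - 2 * \<epsilon>) \<le> F v" "F v \<le> F (v + 2 * \<epsilon>)"
      using \<open>0 \<le> \<epsilon>\<close> by (auto intro: F_mono)
    with 1 y_close[OF \<open>0 < m\<close>] show ?thesis
      by (simp add: abs_le_iff)
  next
    case (2 i)
    then show ?thesis
      using chord_in_levy_band[OF f_nonneg f_int F x_strict[OF 2(1)] 2(2,3)
          y_close[OF Suc_lessD[OF 2(1)]] y_close[OF 2(1)] segments[OF 2(1)]]
      by simp
  qed
qed

theorem lemma1:
  "\<exists>C>0. \<forall>(f :: real \<Rightarrow> real) (F :: real \<Rightarrow> real) (\<epsilon> :: real) (m :: nat)
      (x :: nat \<Rightarrow> real) (Fv :: nat \<Rightarrow> real).
     (\<forall>t. 0 \<le> f t) \<and> (f has_integral 1) UNIV \<and> (\<forall>t. F t = integral {..t} f) \<and>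
     \<epsilon> > 0 \<and> m \<ge> 1 \<and>
     (\<forall>i. Suc i < m \<longrightarrow> x i < x (Suc i)) \<and>
     (\<forall>i<m. 0 \<le> Fv i \<and> Fv i \<le> 1 \<and> Fv i - \<epsilon> \<le> F (x i) \<and> F (x i) \<le> Fv i + \<epsilon>) \<and>
     (\<forall>i. Suc i < m \<longrightarrow>
        x (Suc i) - x i \<le> \<epsilon> \<or>
        (\<exists>flo fhi. flo \<le> fhi \<and> (\<forall>t\<in>{x i..x (Suc i)}. flo \<le> f t \<and> f t \<le> fhi) \<and>
                   (x (Suc i) - x i) * (fhi - flo) \<le> \<epsilon>))
     \<longrightarrow> (\<forall>v\<in>{x 0..x (m - 1)}.
            F (v - C * \<epsilon>) - C * \<epsilon> \<le> pw_lin x (sorted_val Fv m) m v \<and>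
            pw_lin x (sorted_val Fv m) m v \<le> F (v + C * \<epsilon>) + C * \<epsilon>)"
proof (intro exI[of _ 2] conjI[of "(0::real) < 2"] allI impI ballI, goal_cases positive bounds)
  case (bounds f F \<epsilon> m x Fv v)
  then have "\<forall>t. 0 \<le> f t" "f integrable_on UNIV" "\<forall>t. F t = integral {..t} f" "0 < m"
    "\<forall>i. Suc i < m \<longrightarrow> x i < x (Suc i)" "\<forall>i<m. \<bar>Fv i - F (x i)\<bar> \<le> \<epsilon>"
    "x 0 \<le> v" "v \<le> x (m - 1)"
    by (auto simp: abs_le_iff has_integral_integrable)
  moreover have "\<forall>i. Suc i < m \<longrightarrow> x (Suc i) - x i \<le> \<epsilon> \<or>
      (\<exists>lo hi. (\<forall>t\<in>{x i..x (Suc i)}. lo \<le> f t \<and> f t \<le> hi) \<and> (x (Suc i) - x i) * (hi - lo) \<le> \<epsilon>)"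
    using bounds(1) by meson
  ultimately show ?case
    by (intro pw_lin_sorted_levy_bounds[where f = f]) simp_all
qed simp

end
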